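(* Let $X,Y$ be random vectors in $\mathbb{R}^m,\mathbb{R}^n$, $\mu,\nu$ finite symmetric Lévy measures on $\mathbb{R}^m\setminus\{0\}$, $\mathbb{R}^n\setminus\{0\}$ with full support, $\Phi(x)=\int(1-\cos\langle x,s\rangle)\mu(ds)$, $\Psi(y)=\int(1-\cos\langle y,t\rangle)\nu(dt)$, and let $(X_1,Y_1),(X_4,Y_4)$ be i.i.d. copies of $(X,Y)$. Define \begin{align*} \overline{\overline{\Phi}}&=\Phi(X_1-X_4)-\mathbb{E}(\Phi(X_4-X_1)\mid X_4)-\mathbb{E}(\Phi(X_4-X_1)\mid X_1)+\mathbb{E}\Phi(X_1-X_4),\\ \overline{\overline{\Psi}}&=\Psi(Y_1-Y_4)-\mathbb{E}(\Psi(Y_4-Y_1)\mid Y_4)-\mathbb{E}(\Psi(Y_4-Y_1)\mid Y_1)+\mathbb{E}\Psi(Y_1-Y_4). \end{align*} Then $V^2(X,Y)=\mathbb{E}\big[\overline{\overline{\Phi}}\cdot\overline{\overline{\Psi}}\big]$.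
   Context: Symmetric Lévy measure on $\mathbb{R}^d\setminus\{0\}$: $\rho(B)=\rho(-B)$ and $\int(1\wedge|r|^2)\rho(dr)<\infty$; full support: positive mass on every nonempty open subset. $V^2(X,Y)=\iint|f_{(X,Y)}(s,t)-f_X(s)f_Y(t)|^2\,\mu(ds)\,\nu(dt)$, $f$ denoting characteristic functions. *)

theory Defs
  imports "HOL-Probability.Probability"
begin

text \<open>A symmetric Levy measure on the punctured space (a Borel measure giving no
mass to the origin), with the Levy integrability condition.\<close>
definition symmetric_levy_measure :: "'a::euclidean_space measure \<Rightarrow> bool" where
  "symmetric_levy_measure \<rho> \<longleftrightarrow>
     sets \<rho> = sets borel \<and> emeasure \<rho> {0} = 0 \<and>
     (\<forall>B\<in>sets \<rho>. emeasure \<rho> (uminus ` B) = emeasure \<rho> B) \<and>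
     (\<integral>\<^sup>+ r. ennreal (min 1 (norm r ^ 2)) \<partial>\<rho>) < \<infinity>"

definition full_support :: "'a::euclidean_space measure \<Rightarrow> bool" where
  "full_support \<rho> \<longleftrightarrow> (\<forall>U. open U \<and> U \<noteq> {} \<and> 0 \<notin> U \<longrightarrow> emeasure \<rho> U > 0)"

definition charfun :: "'s measure \<Rightarrow> ('s \<Rightarrow> 'a::euclidean_space) \<Rightarrow> 'a \<Rightarrow> complex" where
  "charfun M X s = (LINT \<omega>|M. cis (s \<bullet> X \<omega>))"

definition joint_charfun :: "'s measure \<Rightarrow> ('s \<Rightarrow> 'a::euclidean_space) \<Rightarrow> ('s \<Rightarrow> 'b::euclidean_space)
    \<Rightarrow> 'a \<Rightarrow> 'b \<Rightarrow> complex" where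
  "joint_charfun M X Y s t = (LINT \<omega>|M. cis (s \<bullet> X \<omega> + t \<bullet> Y \<omega>))"

definition dcov2 :: "'a::euclidean_space measure \<Rightarrow> 'b::euclidean_space measure \<Rightarrow> 's measure
    \<Rightarrow> ('s \<Rightarrow> 'a) \<Rightarrow> ('s \<Rightarrow> 'b) \<Rightarrow> real" where
  "dcov2 \<mu> \<nu> M X Y =
     (LINT s|\<mu>. LINT t|\<nu>. (cmod (joint_charfun M X Y s t - charfun M X s * charfun M Y t))^2)"

definition levy_psi :: "'a::euclidean_space measure \<Rightarrow> 'a \<Rightarrow> real" where
  "levy_psi \<mu> x = (LINT s|\<mu>. 1 - cos (x \<bullet> s))"

definition double_centered :: "'s measure \<Rightarrow> ('a::euclidean_space \<Rightarrow> real)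
    \<Rightarrow> ('s \<Rightarrow> 'a) \<Rightarrow> ('s \<Rightarrow> 'a) \<Rightarrow> 's \<Rightarrow> real" where
  "double_centered N \<Phi> Z1 Z4 \<omega> =
     \<Phi> (Z1 \<omega> - Z4 \<omega>)
     - real_cond_exp N (vimage_algebra (space N) Z4 borel) (\<lambda>\<omega>'. \<Phi> (Z4 \<omega>' - Z1 \<omega>')) \<omega>
     - real_cond_exp N (vimage_algebra (space N) Z1 borel) (\<lambda>\<omega>'. \<Phi> (Z4 \<omega>' - Z1 \<omega>')) \<omega>
     + (LINT \<omega>'|N. \<Phi> (Z1 \<omega>' - Z4 \<omega>'))"

end

theory Submission
  imports Defs
begin

text \<open>
  Write \<open>C\<^sub>s(x) = cos \<langle>s,x\<rangle> - E cos \<langle>s,X\<rangle>\<close> and \<open>S\<^sub>s(x) = sin \<langle>s,x\<rangle> - E sin \<langle>s,X\<rangle>\<close>.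
  Since \<open>1 - cos \<langle>x - x',s\<rangle> = 1 - cos \<langle>s,x\<rangle> cos \<langle>s,x'\<rangle> - sin \<langle>s,x\<rangle> sin \<langle>s,x'\<rangle>\<close>, integrating out
  the independent copy (conditional expectation given one copy is an integral against the law)
  shows that the doubly centered \<open>\<Phi>\<close> equals \<open>-\<integral>(C\<^sub>s(x) C\<^sub>s(x') + S\<^sub>s(x) S\<^sub>s(x')) \<mu>(ds)\<close>, and
  likewise for \<open>\<Psi>\<close>. Multiplying, applying Fubini and using independence of the two copies,
  the expectation of the product becomes \<open>\<integral>\<integral>(a\<^sup>2 + b\<^sup>2 + c\<^sup>2 + d\<^sup>2) \<nu>(dt) \<mu>(ds)\<close>, where
  \<open>a, b, c, d\<close> are the cross moments \<open>E C\<^sub>s(X) C\<^sub>t(Y)\<close>, \<open>E C\<^sub>s(X) S\<^sub>t(Y)\<close>, \<open>E S\<^sub>s(X) C\<^sub>t(Y)\<close>,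
  \<open>E S\<^sub>s(X) S\<^sub>t(Y)\<close>. On the other hand \<open>|f\<^sub>X\<^sub>Y(s,t) - f\<^sub>X(s) f\<^sub>Y(t)|\<^sup>2 = (a - d)\<^sup>2 + (b + c)\<^sup>2\<close>;
  the substitution \<open>t \<mapsto> -t\<close> changes the signs of \<open>b\<close> and \<open>d\<close> only, so averaging over it,
  which is allowed because \<open>\<nu>\<close> is symmetric, turns this integrand into \<open>a\<^sup>2 + b\<^sup>2 + c\<^sup>2 + d\<^sup>2\<close>.
\<close>

lemma (in finite_measure) abs_integral_le_bound:
  fixes f :: "'a \<Rightarrow> real"
  assumes "\<And>x. \<bar>f x\<bar> \<le> B"
  shows "\<bar>integral\<^sup>L M f\<bar> \<le> B * measure M (space M)"
proof (cases "integrable M f")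
  case True
  have "\<bar>integral\<^sup>L M f\<bar> \<le> (\<integral>x. \<bar>f x\<bar> \<partial>M)" by (rule integral_abs_bound)
  also have "\<dots> \<le> (\<integral>x. B \<partial>M)"
    using True assms by (intro integral_mono) auto
  finally show ?thesis by (simp add: mult.commute)
next
  case False
  have "0 \<le> B" using assms[of undefined] by linarith
  then show ?thesis using False by (simp add: not_integrable_integral_eq)
qed

lemma Fubini_integral_bounded:
  fixes f :: "'a \<Rightarrow> 'b \<Rightarrow> real"
  assumes "finite_measure M1" "finite_measure M2"
    and "case_prod f \<in> borel_measurable (M1 \<Otimes>\<^sub>M M2)" and "\<And>x y. \<bar>f x y\<bar> \<le> B"
  shows "(\<integral>x. (\<integral>y. f x y \<partial>M2) \<partial>M1) = (\<integral>y. (\<integral>x. f x y \<partial>M1) \<partial>M2)"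
proof -
  interpret M1: finite_measure M1 by fact
  interpret M2: finite_measure M2 by fact
  interpret pair_sigma_finite M1 M2 ..
  interpret M12: finite_measure "M1 \<Otimes>\<^sub>M M2" by (rule finite_measure_pair_measure) unfold_locales
  show ?thesis
    by (intro Fubini_integral[symmetric] M12.integrable_const_bound[where B=B]) (auto simp: assms)
qed

lemma Fubini_integral_bounded_triple:
  fixes f :: "'a \<Rightarrow> 'b \<Rightarrow> 'c \<Rightarrow> real"
  assumes "finite_measure M1" "finite_measure M2" "finite_measure M3"
    and [measurable]: "(\<lambda>(x, y, z). f x y z) \<in> borel_measurable (M1 \<Otimes>\<^sub>M (M2 \<Otimes>\<^sub>M M3))"
    and bounded: "\<And>x y z. \<bar>f x y z\<bar> \<le> B"
  shows "(\<integral>x. (\<integral>y. (\<integral>z. f x y z \<partial>M3) \<partial>M2) \<partial>M1) = (\<integral>z. (\<integral>x. (\<integral>y. f x y z \<partial>M2) \<partial>M1) \<partial>M3)"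
proof -
  interpret M2: finite_measure M2 by fact
  have "(\<lambda>p. (fst (fst p), snd p, snd (fst p))) \<in> (M1 \<Otimes>\<^sub>M M3) \<Otimes>\<^sub>M M2 \<rightarrow>\<^sub>M M1 \<Otimes>\<^sub>M (M2 \<Otimes>\<^sub>M M3)"
    by measurable
  from measurable_compose[OF this assms(4)]
  have [measurable]: "(\<lambda>p. f (fst (fst p)) (snd p) (snd (fst p))) \<in> borel_measurable ((M1 \<Otimes>\<^sub>M M3) \<Otimes>\<^sub>M M2)"
    by (simp add: case_prod_beta')
  have "(\<integral>x. (\<integral>y. (\<integral>z. f x y z \<partial>M3) \<partial>M2) \<partial>M1) = (\<integral>x. (\<integral>z. (\<integral>y. f x y z \<partial>M2) \<partial>M3) \<partial>M1)"
    by (intro Bochner_Integration.integral_cong refl Fubini_integral_bounded[OF assms(2,3), where B=B] bounded)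
      measurable
  also have "\<dots> = (\<integral>z. (\<integral>x. (\<integral>y. f x y z \<partial>M2) \<partial>M1) \<partial>M3)"
    using M2.abs_integral_le_bound[OF bounded]
    by (intro Fubini_integral_bounded assms(1,3)) measurable
  finally show ?thesis .
qed

lemma integral_pair_measure_mult_bounded:
  fixes f :: "'a \<Rightarrow> real" and g :: "'b \<Rightarrow> real"
  assumes "finite_measure M1" "finite_measure M2"
    and [measurable]: "f \<in> borel_measurable M1" "g \<in> borel_measurable M2"
    and "\<And>x. \<bar>f x\<bar> \<le> B" "\<And>y. \<bar>g y\<bar> \<le> C"
  shows "(\<integral>w. f (fst w) * g (snd w) \<partial>(M1 \<Otimes>\<^sub>M M2)) = (\<integral>x. f x \<partial>M1) * (\<integral>y. g y \<partial>M2)"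
proof -
  interpret M1: finite_measure M1 by fact
  interpret M2: finite_measure M2 by fact
  interpret pair_sigma_finite M1 M2 ..
  interpret M12: finite_measure "M1 \<Otimes>\<^sub>M M2" by (rule finite_measure_pair_measure) unfold_locales
  have "\<bar>f x * g y\<bar> \<le> B * C" for x y
    unfolding abs_mult using assms(5,6) by (intro mult_mono) (auto intro: order_trans[OF abs_ge_zero])
  then have "integrable (M1 \<Otimes>\<^sub>M M2) (\<lambda>(x, y). f x * g y)"
    by (intro M12.integrable_const_bound[where B="B * C"]) auto
  from integral_fst'[OF this] show ?thesis
    by (simp add: case_prod_beta')
qed

lemma borel_measurable_fst_borel:
  "fst \<in> borel_measurable (borel :: ('a::second_countable_topology \<times> 'b::second_countable_topology) measure)"
  and borel_measurable_snd_borel: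
  "snd \<in> borel_measurable (borel :: ('a::second_countable_topology \<times> 'b::second_countable_topology) measure)"
  using measurable_fst[of "borel :: 'a measure" "borel :: 'b measure"]
    measurable_snd[of "borel :: 'a measure" "borel :: 'b measure"]
  unfolding borel_prod .

lemma distr_fst_pair:
  fixes X :: "'s \<Rightarrow> 'a::second_countable_topology" and Y :: "'s \<Rightarrow> 'b::second_countable_topology"
  assumes "X \<in> borel_measurable M" "Y \<in> borel_measurable M"
  shows "distr (distr M borel (\<lambda>\<omega>. (X \<omega>, Y \<omega>))) borel fst = distr M borel X"
  using measurable_Pair[OF assms] unfolding borel_prod
  by (subst distr_distr) (simp_all add: comp_def borel_measurable_fst_borel)

lemma distr_snd_pair:
  fixes X :: "'s \<Rightarrow> 'a::second_countable_topology" and Y :: "'s \<Rightarrow> 'b::second_countable_topology"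
  assumes "X \<in> borel_measurable M" "Y \<in> borel_measurable M"
  shows "distr (distr M borel (\<lambda>\<omega>. (X \<omega>, Y \<omega>))) borel snd = distr M borel Y"
  using measurable_Pair[OF assms] unfolding borel_prod
  by (subst distr_distr) (simp_all add: comp_def borel_measurable_snd_borel)

lemma integral_symmetrize:
  fixes h :: "'a::euclidean_space \<Rightarrow> real"
  assumes "finite_measure \<nu>" "sets \<nu> = sets borel" "distr \<nu> borel uminus = \<nu>"
    and h: "h \<in> borel_measurable borel" "\<And>t. \<bar>h t\<bar> \<le> B"
  shows "(\<integral>t. (h t + h (- t)) / 2 \<partial>\<nu>) = (\<integral>t. h t \<partial>\<nu>)"
proof -
  interpret finite_measure \<nu> by fact
  have id: "(\<lambda>t. t) \<in> borel_measurable \<nu>" by (rule measurable_ident_sets) fact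
  have integrable: "integrable \<nu> (\<lambda>t. h (f t))" if "f \<in> borel_measurable \<nu>" for f
    by (rule integrable_const_bound[where B=B]) (simp_all add: h(2) measurable_compose[OF that h(1)])
  have "(\<integral>t. h (- t) \<partial>\<nu>) = (\<integral>t. h t \<partial>distr \<nu> borel uminus)"
    by (rule integral_distr[OF borel_measurable_uminus[OF id] h(1), symmetric])
  also have "\<dots> = (\<integral>t. h t \<partial>\<nu>)" unfolding assms(3) ..
  finally show ?thesis
    by (simp only: integral_divide_zero
        Bochner_Integration.integral_add[OF integrable[OF id] integrable[OF borel_measurable_uminus[OF id]]])
      simp
qed

lemma cmod_Complex_diff_mult_power2:
  "(cmod (Complex (A - B) (C + D) - Complex a b * Complex c d))\<^sup>2
    = ((A - a * c) - (B - b * d))\<^sup>2 + ((D - a * d) + (C - b * c))\<^sup>2"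
  unfolding cmod_power2 by (simp add: power2_eq_square) algebra

lemma borel_measurable_cis[measurable (raw)]:
  "f \<in> borel_measurable M \<Longrightarrow> (\<lambda>x. cis (f x)) \<in> borel_measurable M"
  unfolding borel_measurable_complex_iff by simp

lemma (in finite_measure) integral_cis:
  fixes \<theta> :: "'a \<Rightarrow> real"
  assumes [measurable]: "\<theta> \<in> borel_measurable M"
  shows "(\<integral>x. cis (\<theta> x) \<partial>M) = Complex (\<integral>x. cos (\<theta> x) \<partial>M) (\<integral>x. sin (\<theta> x) \<partial>M)"
proof -
  have "integrable M (\<lambda>x. cis (\<theta> x))"
    by (intro integrable_const_bound[where B=1]) auto
  from integral_bounded_linear[OF bounded_linear_Re this] integral_bounded_linear[OF bounded_linear_Im this]
  show ?thesis by (simp add: complex_eq_iff)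
qed

lemma (in prob_space) integral_centered_mult:
  fixes f g :: "'a \<Rightarrow> real"
  assumes "integrable M f" "integrable M g" "integrable M (\<lambda>x. f x * g x)"
  shows "(\<integral>x. (f x - expectation f) * (g x - expectation g) \<partial>M)
    = (\<integral>x. f x * g x \<partial>M) - expectation f * expectation g"
proof -
  have "(\<integral>x. (f x - expectation f) * (g x - expectation g) \<partial>M)
      = (\<integral>x. f x * g x - expectation g * f x - expectation f * g x + expectation f * expectation g \<partial>M)"
    by (intro Bochner_Integration.integral_cong) (simp_all add: algebra_simps)
  also have "\<dots> = (\<integral>x. f x * g x \<partial>M) - expectation f * expectation g"
    using assms by (simp add: prob_space)
  finally show ?thesis .
qed

lemma (in prob_space) indep_var_commute:
  assumes "indep_var S X T Y"
  shows "indep_var T Y S X"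
proof -
  have rv[measurable]: "random_variable S X" "random_variable T Y"
    using assms by (auto dest: indep_var_rv1 indep_var_rv2)
  interpret SX: prob_space "distr M S X" by (rule prob_space_distr) fact
  interpret TY: prob_space "distr M T Y" by (rule prob_space_distr) fact
  interpret pair_sigma_finite "distr M T Y" "distr M S X" ..
  have "distr M (T \<Otimes>\<^sub>M S) (\<lambda>x. (Y x, X x))
      = distr (distr M (S \<Otimes>\<^sub>M T) (\<lambda>x. (X x, Y x))) (T \<Otimes>\<^sub>M S) (\<lambda>(x, y). (y, x))"
    by (subst distr_distr) (auto simp: comp_def)
  also have "\<dots> = distr (distr M S X \<Otimes>\<^sub>M distr M T Y) (distr M T Y \<Otimes>\<^sub>M distr M S X) (\<lambda>(x, y). (y, x))"
    using assms unfolding indep_var_distribution_eq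
    by (intro distr_cong) (auto cong: sets_pair_measure_cong)
  also have "\<dots> = distr M T Y \<Otimes>\<^sub>M distr M S X"
    by (rule distr_pair_swap[symmetric])
  finally show ?thesis
    unfolding indep_var_distribution_eq using rv by simp
qed

lemma (in prob_space) indep_var_pair_components:
  fixes X1 X4 :: "'a \<Rightarrow> 'b::second_countable_topology" and Y1 Y4 :: "'a \<Rightarrow> 'c::second_countable_topology"
  assumes "indep_var borel (\<lambda>\<omega>. (X1 \<omega>, Y1 \<omega>)) borel (\<lambda>\<omega>. (X4 \<omega>, Y4 \<omega>))"
  shows "indep_var borel X1 borel X4" and "indep_var borel Y1 borel Y4"
  using indep_var_compose[OF assms borel_measurable_fst_borel borel_measurable_fst_borel]
    indep_var_compose[OF assms borel_measurable_snd_borel borel_measurable_snd_borel]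
  by (simp_all add: comp_def)

lemma (in prob_space) integral_indep_var_same_law:
  fixes V1 V4 :: "'a \<Rightarrow> 'b::topological_space" and G :: "'b \<times> 'b \<Rightarrow> real"
  assumes "indep_var borel V1 borel V4" "distr M borel V1 = P" "distr M borel V4 = P"
    and "G \<in> borel_measurable (borel \<Otimes>\<^sub>M borel)"
  shows "(\<integral>\<omega>. G (V1 \<omega>, V4 \<omega>) \<partial>M) = (\<integral>w. G w \<partial>(P \<Otimes>\<^sub>M P))"
proof -
  have joint: "distr M (borel \<Otimes>\<^sub>M borel) (\<lambda>\<omega>. (V1 \<omega>, V4 \<omega>)) = P \<Otimes>\<^sub>M P"
    using assms(1) unfolding indep_var_distribution_eq assms(2,3) by (blast intro: sym)
  have "(\<lambda>\<omega>. (V1 \<omega>, V4 \<omega>)) \<in> M \<rightarrow>\<^sub>M borel \<Otimes>\<^sub>M borel"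
    by (intro measurable_Pair indep_var_rv1[OF assms(1)] indep_var_rv2[OF assms(1)])
  from integral_distr[OF this assms(4)] show ?thesis
    unfolding joint by simp
qed

lemma (in prob_space) sigma_finite_subalgebra_vimage_algebra:
  assumes "Z \<in> borel_measurable M"
  shows "sigma_finite_subalgebra M (vimage_algebra (space M) Z borel)"
  using assms
  by (intro finite_measure_subalgebra_is_sigma_finite)
    (auto simp: finite_measure_subalgebra_def finite_measure_subalgebra_axioms_def subalgebra_def
      sets_image_in_sets finite_measure_axioms)

lemma (in prob_space) integral_indep_var:
  fixes Z W :: "'a \<Rightarrow> 'b::topological_space" and h :: "'b \<Rightarrow> 'b \<Rightarrow> real"
  assumes indep: "indep_var borel Z borel W"
    and [measurable]: "case_prod h \<in> borel_measurable (borel \<Otimes>\<^sub>M borel)"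
    and bounded: "\<And>z w. \<bar>h z w\<bar> \<le> B"
  shows "(\<integral>\<omega>. h (Z \<omega>) (W \<omega>) \<partial>M) = (\<integral>z. (\<integral>w. h z w \<partial>distr M borel W) \<partial>distr M borel Z)"
proof -
  let ?Q = "distr M borel Z" and ?R = "distr M borel W"
  have [measurable]: "Z \<in> borel_measurable M" "W \<in> borel_measurable M"
    by (rule indep_var_rv1[OF indep], rule indep_var_rv2[OF indep])
  have joint: "distr M (borel \<Otimes>\<^sub>M borel) (\<lambda>\<omega>. (Z \<omega>, W \<omega>)) = ?Q \<Otimes>\<^sub>M ?R"
    using indep unfolding indep_var_distribution_eq by simp
  interpret Q: prob_space ?Q by (rule prob_space_distr) simp
  interpret R: prob_space ?R by (rule prob_space_distr) simp
  interpret QR: pair_sigma_finite ?Q ?R ..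
  interpret QRf: finite_measure "?Q \<Otimes>\<^sub>M ?R" by (rule finite_measure_pair_measure) unfold_locales
  have "(\<integral>\<omega>. h (Z \<omega>) (W \<omega>) \<partial>M) = (\<integral>p. h (fst p) (snd p) \<partial>(?Q \<Otimes>\<^sub>M ?R))"
    unfolding joint[symmetric] by (subst integral_distr) auto
  also have "\<dots> = (\<integral>z. (\<integral>w. h z w \<partial>?R) \<partial>?Q)"
    by (subst QR.integral_fst'[symmetric]) (auto intro!: QRf.integrable_const_bound[where B=B] simp: bounded)
  finally show ?thesis .
qed

lemma (in prob_space) real_cond_exp_indep_var:
  fixes Z W :: "'a \<Rightarrow> 'b::topological_space" and g :: "'b \<Rightarrow> 'b \<Rightarrow> real"
  assumes indep: "indep_var borel Z borel W"
    and [measurable]: "case_prod g \<in> borel_measurable (borel \<Otimes>\<^sub>M borel)"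
    and bounded: "\<And>x y. \<bar>g x y\<bar> \<le> B"
  shows "AE \<omega> in M. real_cond_exp M (vimage_algebra (space M) Z borel) (\<lambda>\<omega>. g (Z \<omega>) (W \<omega>)) \<omega>
           = (\<integral>w. g (Z \<omega>) w \<partial>distr M borel W)"
proof -
  let ?F = "vimage_algebra (space M) Z borel" and ?R = "distr M borel W"
  have [measurable]: "Z \<in> borel_measurable M" "W \<in> borel_measurable M"
    by (rule indep_var_rv1[OF indep], rule indep_var_rv2[OF indep])
  interpret R: prob_space ?R by (rule prob_space_distr) simp
  interpret F: sigma_finite_subalgebra M ?F
    by (rule sigma_finite_subalgebra_vimage_algebra) simp
  have B0: "0 \<le> B" using bounded[of undefined undefined] by linarith
  define A where "A z = (\<integral>w. g z w \<partial>?R)" for z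
  have [measurable]: "A \<in> borel_measurable borel" unfolding A_def by measurable
  have A_bounded: "\<bar>A z\<bar> \<le> B" for z
    using R.abs_integral_le_bound[of "g z" B] bounded R.prob_space by (simp add: A_def)
  have "AE \<omega> in M. real_cond_exp M ?F (\<lambda>\<omega>. g (Z \<omega>) (W \<omega>)) \<omega> = A (Z \<omega>)"
  proof (rule F.real_cond_exp_charact)
    show "integrable M (\<lambda>\<omega>. g (Z \<omega>) (W \<omega>))"
      by (intro integrable_const_bound[where B=B]) (auto simp: bounded)
    show "integrable M (\<lambda>\<omega>. A (Z \<omega>))"
      by (intro integrable_const_bound[where B=B]) (auto simp: A_bounded)
    show "(\<lambda>\<omega>. A (Z \<omega>)) \<in> borel_measurable ?F"
      by (rule measurable_compose[OF measurable_vimage_algebra1]) auto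
    fix S assume "S \<in> sets ?F"
    then obtain C where C[measurable]: "C \<in> sets borel" and S: "S = Z -` C \<inter> space M"
      by (auto simp: sets_vimage_algebra2)
    have "(\<integral>\<omega>\<in>S. g (Z \<omega>) (W \<omega>) \<partial>M) = (\<integral>\<omega>. indicator C (Z \<omega>) * g (Z \<omega>) (W \<omega>) \<partial>M)"
      unfolding set_lebesgue_integral_def S
      by (intro Bochner_Integration.integral_cong) (auto split: split_indicator)
    also have "\<dots> = (\<integral>z. (\<integral>w. indicator C z * g z w \<partial>?R) \<partial>distr M borel Z)"
      by (rule integral_indep_var[OF indep, where B=B]) (auto simp: bounded B0 split: split_indicator)
    also have "\<dots> = (\<integral>\<omega>\<in>S. A (Z \<omega>) \<partial>M)"
      unfolding set_lebesgue_integral_def S A_def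
      by (subst integral_distr) (auto intro!: Bochner_Integration.integral_cong split: split_indicator)
    finally show "(\<integral>\<omega>\<in>S. g (Z \<omega>) (W \<omega>) \<partial>M) = (\<integral>\<omega>\<in>S. A (Z \<omega>) \<partial>M)" .
  qed
  then show ?thesis unfolding A_def .
qed

lemma symmetric_levy_measure_distr_uminus:
  assumes "symmetric_levy_measure \<rho>"
  shows "distr \<rho> borel uminus = \<rho>"
proof (rule measure_eqI)
  have sets: "sets \<rho> = sets borel" using assms by (simp add: symmetric_levy_measure_def)
  then show "sets (distr \<rho> borel uminus) = sets \<rho>" by simp
  fix A assume "A \<in> sets (distr \<rho> borel uminus)"
  then have A: "A \<in> sets borel" by simp
  have "uminus -` A \<inter> space \<rho> = uminus ` A"
    using sets_eq_imp_space_eq[OF sets] by (auto simp: image_iff) (metis minus_minus)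
  then show "emeasure (distr \<rho> borel uminus) A = emeasure \<rho> A"
    using assms A sets by (simp add: emeasure_distr symmetric_levy_measure_def)
qed

lemma cos_inner_diff:
  fixes a b s :: "'a::real_inner"
  shows "cos ((a - b) \<bullet> s) = cos (s \<bullet> a) * cos (s \<bullet> b) + sin (s \<bullet> a) * sin (s \<bullet> b)"
  by (simp only: inner_diff_left cos_diff inner_commute[of a s] inner_commute[of b s])

lemma borel_measurable_levy_psi:
  assumes "finite_measure \<mu>" "sets \<mu> = sets borel"
  shows "levy_psi \<mu> \<in> borel_measurable borel"
proof -
  interpret finite_measure \<mu> by fact
  have [measurable]: "(\<lambda>s. s) \<in> borel_measurable \<mu>" by (rule measurable_ident_sets[OF assms(2)])
  show ?thesis unfolding levy_psi_def[abs_def] by measurable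
qed

lemma abs_levy_psi_le:
  assumes "finite_measure \<mu>"
  shows "\<bar>levy_psi \<mu> x\<bar> \<le> 2 * measure \<mu> (space \<mu>)"
  unfolding levy_psi_def using abs_cos_le_one
  by (intro finite_measure.abs_integral_le_bound[OF assms]) (simp add: abs_le_iff)

definition double_centered_kernel :: "'a measure \<Rightarrow> ('a::euclidean_space \<Rightarrow> real) \<Rightarrow> 'a \<Rightarrow> 'a \<Rightarrow> real" where
  "double_centered_kernel Q \<Phi> x x' =
     \<Phi> (x - x') - (\<integral>y. \<Phi> (x' - y) \<partial>Q) - (\<integral>y. \<Phi> (y - x) \<partial>Q) + (\<integral>y. (\<integral>y'. \<Phi> (y - y') \<partial>Q) \<partial>Q)"

lemma borel_measurable_double_centered:
  fixes Z1 Z4 :: "'s \<Rightarrow> 'a::euclidean_space"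
  assumes [measurable]: "\<Phi> \<in> borel_measurable borel" "Z1 \<in> borel_measurable M" "Z4 \<in> borel_measurable M"
  shows "double_centered M \<Phi> Z1 Z4 \<in> borel_measurable M"
  unfolding double_centered_def by measurable

lemma (in prob_space) double_centered_AE_eq_kernel:
  fixes Z1 Z4 :: "'a \<Rightarrow> 'b::euclidean_space"
  assumes indep: "indep_var borel Z1 borel Z4" and same_law: "distr M borel Z4 = distr M borel Z1"
    and [measurable]: "\<Phi> \<in> borel_measurable borel" and bounded: "\<And>x. \<bar>\<Phi> x\<bar> \<le> B"
  shows "AE \<omega> in M. double_centered M \<Phi> Z1 Z4 \<omega> = double_centered_kernel (distr M borel Z1) \<Phi> (Z1 \<omega>) (Z4 \<omega>)"
proof -
  let ?Q = "distr M borel Z1"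
  have [measurable]: "Z1 \<in> borel_measurable M" "Z4 \<in> borel_measurable M"
    by (rule indep_var_rv1[OF indep], rule indep_var_rv2[OF indep])
  have cond_Z4: "AE \<omega> in M. real_cond_exp M (vimage_algebra (space M) Z4 borel) (\<lambda>\<omega>. \<Phi> (Z4 \<omega> - Z1 \<omega>)) \<omega>
      = (\<integral>y. \<Phi> (Z4 \<omega> - y) \<partial>?Q)"
    using real_cond_exp_indep_var[OF indep_var_commute[OF indep], of "\<lambda>x y. \<Phi> (x - y)" B] bounded
    by simp
  have cond_Z1: "AE \<omega> in M. real_cond_exp M (vimage_algebra (space M) Z1 borel) (\<lambda>\<omega>. \<Phi> (Z4 \<omega> - Z1 \<omega>)) \<omega>
      = (\<integral>y. \<Phi> (y - Z1 \<omega>) \<partial>?Q)"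
    using real_cond_exp_indep_var[OF indep, of "\<lambda>x y. \<Phi> (y - x)" B] bounded same_law
    by simp
  have "(\<integral>\<omega>. \<Phi> (Z1 \<omega> - Z4 \<omega>) \<partial>M) = (\<integral>y. (\<integral>y'. \<Phi> (y - y') \<partial>?Q) \<partial>?Q)"
    using integral_indep_var[OF indep, of "\<lambda>x y. \<Phi> (x - y)" B] bounded same_law by simp
  then show ?thesis
    using cond_Z1 cond_Z4 unfolding double_centered_def double_centered_kernel_def by auto
qed

locale euclidean_distribution = prob_space Q for Q :: "'a::euclidean_space measure" +
  assumes sets_Q: "sets Q = sets borel"
begin

lemma measurable_id_Q_borel[measurable]: "(\<lambda>x. x) \<in> borel_measurable Q"
  by (rule measurable_ident_sets[OF sets_Q])

lemma integrable_bounded: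
  fixes f :: "'a \<Rightarrow> real"
  shows "f \<in> borel_measurable borel \<Longrightarrow> (\<And>x. \<bar>f x\<bar> \<le> B) \<Longrightarrow> integrable Q f"
  by (intro integrable_const_bound[where B=B]) (auto simp: measurable_cong_sets[OF sets_Q refl])

definition centered_cos :: "'a \<Rightarrow> 'a \<Rightarrow> real" where
  "centered_cos s x = cos (s \<bullet> x) - expectation (\<lambda>y. cos (s \<bullet> y))"

definition centered_sin :: "'a \<Rightarrow> 'a \<Rightarrow> real" where
  "centered_sin s x = sin (s \<bullet> x) - expectation (\<lambda>y. sin (s \<bullet> y))"

lemma borel_measurable_centered_cos[measurable (raw)]:
  assumes "f \<in> borel_measurable M" "g \<in> borel_measurable M"
  shows "(\<lambda>x. centered_cos (f x) (g x)) \<in> borel_measurable M"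
proof -
  have "case_prod centered_cos \<in> borel_measurable (borel \<Otimes>\<^sub>M borel)"
    unfolding centered_cos_def by measurable
  from measurable_compose[OF measurable_Pair[OF assms] this] show ?thesis by simp
qed

lemma borel_measurable_centered_sin[measurable (raw)]:
  assumes "f \<in> borel_measurable M" "g \<in> borel_measurable M"
  shows "(\<lambda>x. centered_sin (f x) (g x)) \<in> borel_measurable M"
proof -
  have "case_prod centered_sin \<in> borel_measurable (borel \<Otimes>\<^sub>M borel)"
    unfolding centered_sin_def by measurable
  from measurable_compose[OF measurable_Pair[OF assms] this] show ?thesis by simp
qed

lemma abs_centered_cos_le: "\<bar>centered_cos s x\<bar> \<le> 2"
proof -
  have "\<bar>expectation (\<lambda>y. cos (s \<bullet> y))\<bar> \<le> 1"
    using abs_integral_le_bound[of "\<lambda>y. cos (s \<bullet> y)" 1] prob_space by simp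
  then show ?thesis unfolding centered_cos_def using abs_cos_le_one[of "s \<bullet> x"] by linarith
qed

lemma abs_centered_sin_le: "\<bar>centered_sin s x\<bar> \<le> 2"
proof -
  have "\<bar>expectation (\<lambda>y. sin (s \<bullet> y))\<bar> \<le> 1"
    using abs_integral_le_bound[of "\<lambda>y. sin (s \<bullet> y)" 1] prob_space by simp
  then show ?thesis unfolding centered_sin_def using abs_sin_le_one[of "s \<bullet> x"] by linarith
qed

lemma centered_cos_uminus: "centered_cos (- s) x = centered_cos s x"
  by (simp add: centered_cos_def)

lemma centered_sin_uminus: "centered_sin (- s) x = - centered_sin s x"
  by (simp add: centered_sin_def)

definition centered_trig_kernel :: "'a \<Rightarrow> 'a \<Rightarrow> 'a \<Rightarrow> real" where
  "centered_trig_kernel s x x' = centered_cos s x * centered_cos s x' + centered_sin s x * centered_sin s x'"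

lemma borel_measurable_centered_trig_kernel[measurable (raw)]:
  "f \<in> borel_measurable M \<Longrightarrow> g \<in> borel_measurable M \<Longrightarrow> h \<in> borel_measurable M \<Longrightarrow>
    (\<lambda>x. centered_trig_kernel (f x) (g x) (h x)) \<in> borel_measurable M"
  unfolding centered_trig_kernel_def
  by (intro borel_measurable_add borel_measurable_times borel_measurable_centered_cos
      borel_measurable_centered_sin)

lemma abs_centered_trig_kernel_le: "\<bar>centered_trig_kernel s x x'\<bar> \<le> 8"
proof -
  have "\<bar>centered_cos s x * centered_cos s x'\<bar> \<le> 2 * 2" "\<bar>centered_sin s x * centered_sin s x'\<bar> \<le> 2 * 2"
    unfolding abs_mult by (intro mult_mono abs_centered_cos_le abs_centered_sin_le; simp)+
  then show ?thesis unfolding centered_trig_kernel_def by linarith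
qed

lemma double_centered_kernel_one_minus_cos:
  "double_centered_kernel Q (\<lambda>u. 1 - cos (u \<bullet> s)) x x'
    = - centered_trig_kernel s x x'"
proof -
  define c where "c = expectation (\<lambda>y. cos (s \<bullet> y))"
  define d where "d = expectation (\<lambda>y. sin (s \<bullet> y))"
  have int: "integrable Q (\<lambda>y. cos (s \<bullet> y))" "integrable Q (\<lambda>y. sin (s \<bullet> y))"
    by (auto intro!: integrable_bounded[where B=1])
  have shift: "(\<integral>y. 1 - cos ((a - y) \<bullet> s) \<partial>Q) = 1 - (c * cos (s \<bullet> a) + d * sin (s \<bullet> a))" for a
    using int unfolding cos_inner_diff c_def d_def by (simp add: prob_space)
  have shift': "(\<integral>y. 1 - cos ((y - a) \<bullet> s) \<partial>Q) = 1 - (c * cos (s \<bullet> a) + d * sin (s \<bullet> a))" for a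
  proof -
    have "cos ((y - a) \<bullet> s) = cos ((a - y) \<bullet> s)" for y
      by (metis cos_minus inner_minus_left minus_diff_eq)
    then show ?thesis using shift[of a] by simp
  qed
  have "(\<integral>y. (\<integral>y'. 1 - cos ((y - y') \<bullet> s) \<partial>Q) \<partial>Q) = (\<integral>y. 1 - (c * cos (s \<bullet> y) + d * sin (s \<bullet> y)) \<partial>Q)"
    by (simp only: shift)
  also have "\<dots> = 1 - (c * expectation (\<lambda>y. cos (s \<bullet> y)) + d * expectation (\<lambda>y. sin (s \<bullet> y)))"
    using int by (simp add: prob_space)
  also have "\<dots> = 1 - (c * c + d * d)"
    unfolding c_def d_def ..
  finally have double: "(\<integral>y. (\<integral>y'. 1 - cos ((y - y') \<bullet> s) \<partial>Q) \<partial>Q) = 1 - (c * c + d * d)" .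
  show ?thesis
    unfolding double_centered_kernel_def double unfolding shift shift'
    unfolding cos_inner_diff centered_trig_kernel_def centered_cos_def centered_sin_def
      c_def[symmetric] d_def[symmetric]
    by (simp add: algebra_simps)
qed

lemma double_centered_kernel_integral:
  fixes \<mu> :: "'b measure" and \<phi> :: "'b \<Rightarrow> 'a \<Rightarrow> real"
  assumes \<mu>: "finite_measure \<mu>" and [measurable]: "case_prod \<phi> \<in> borel_measurable (\<mu> \<Otimes>\<^sub>M borel)"
    and bounded: "\<And>s u. \<bar>\<phi> s u\<bar> \<le> B"
  shows "double_centered_kernel Q (\<lambda>u. \<integral>s. \<phi> s u \<partial>\<mu>) x x' = (\<integral>s. double_centered_kernel Q (\<phi> s) x x' \<partial>\<mu>)"
proof -
  interpret \<mu>: finite_measure \<mu> by fact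
  have swap2: "(\<integral>y. (\<integral>s. \<phi> s (x' - y) \<partial>\<mu>) \<partial>Q) = (\<integral>s. (\<integral>y. \<phi> s (x' - y) \<partial>Q) \<partial>\<mu>)"
    "(\<integral>y. (\<integral>s. \<phi> s (y - x) \<partial>\<mu>) \<partial>Q) = (\<integral>s. (\<integral>y. \<phi> s (y - x) \<partial>Q) \<partial>\<mu>)"
    by (intro Fubini_integral_bounded[OF finite_measure_axioms \<mu>, where B=B] bounded; measurable)+
  have swap3: "(\<integral>y. (\<integral>y'. (\<integral>s. \<phi> s (y - y') \<partial>\<mu>) \<partial>Q) \<partial>Q) = (\<integral>s. (\<integral>y. (\<integral>y'. \<phi> s (y - y') \<partial>Q) \<partial>Q) \<partial>\<mu>)"
    by (intro Fubini_integral_bounded_triple[OF finite_measure_axioms finite_measure_axioms \<mu>, where B=B]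
        bounded) measurable
  have integrable: "integrable \<mu> f" if "f \<in> borel_measurable \<mu>" "\<And>s. \<bar>f s\<bar> \<le> B" for f
    using that by (intro \<mu>.integrable_const_bound[where B=B]) auto
  have bounded_Q: "\<bar>\<integral>y. \<phi> s (f y) \<partial>Q\<bar> \<le> B" for s f
    using abs_integral_le_bound[of "\<lambda>y. \<phi> s (f y)" B] bounded prob_space by simp
  have bounded_QQ: "\<bar>\<integral>y. (\<integral>y'. \<phi> s (y - y') \<partial>Q) \<partial>Q\<bar> \<le> B" for s
    using abs_integral_le_bound[of "\<lambda>y. \<integral>y'. \<phi> s (y - y') \<partial>Q" B] bounded_Q prob_space by simp
  have "integrable \<mu> (\<lambda>s. \<phi> s (x - x'))" "integrable \<mu> (\<lambda>s. \<integral>y. \<phi> s (x' - y) \<partial>Q)"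
    "integrable \<mu> (\<lambda>s. \<integral>y. \<phi> s (y - x) \<partial>Q)" "integrable \<mu> (\<lambda>s. \<integral>y. (\<integral>y'. \<phi> s (y - y') \<partial>Q) \<partial>Q)"
    by (intro integrable bounded bounded_Q bounded_QQ; measurable)+
  then show ?thesis
    unfolding double_centered_kernel_def swap2 swap3 by simp
qed

lemma double_centered_kernel_levy_psi:
  assumes "finite_measure \<mu>" and sets_\<mu>: "sets \<mu> = sets borel"
  shows "double_centered_kernel Q (levy_psi \<mu>) x x'
    = - (\<integral>s. centered_trig_kernel s x x' \<partial>\<mu>)"
proof -
  have [measurable]: "(\<lambda>s. s) \<in> borel_measurable \<mu>" by (rule measurable_ident_sets[OF sets_\<mu>])
  have "double_centered_kernel Q (levy_psi \<mu>) x x' = (\<integral>s. double_centered_kernel Q (\<lambda>u. 1 - cos (u \<bullet> s)) x x' \<partial>\<mu>)"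
    unfolding levy_psi_def[abs_def]
  proof (rule double_centered_kernel_integral[OF assms(1), where B=2])
    have "(\<lambda>p. 1 - cos (snd p \<bullet> fst p)) \<in> borel_measurable (\<mu> \<Otimes>\<^sub>M borel)"
      by measurable
    then show "(\<lambda>(s, u). 1 - cos (u \<bullet> s)) \<in> borel_measurable (\<mu> \<Otimes>\<^sub>M borel)"
      by (simp add: case_prod_beta')
    show "\<bar>1 - cos (u \<bullet> s)\<bar> \<le> 2" for s u
      using abs_cos_le_one[of "u \<bullet> s"] by linarith
  qed
  then show ?thesis by (simp only: double_centered_kernel_one_minus_cos Bochner_Integration.integral_minus)
qed

lemma borel_measurable_double_centered_kernel:
  assumes [measurable]: "\<Phi> \<in> borel_measurable borel" and "f \<in> borel_measurable M" "g \<in> borel_measurable M"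
  shows "(\<lambda>x. double_centered_kernel Q \<Phi> (f x) (g x)) \<in> borel_measurable M"
proof -
  have "(\<lambda>p. double_centered_kernel Q \<Phi> (fst p) (snd p)) \<in> borel_measurable (borel \<Otimes>\<^sub>M borel)"
    unfolding double_centered_kernel_def by measurable
  from measurable_compose[OF measurable_Pair[OF assms(2,3)] this] show ?thesis by simp
qed

end

locale joint_distribution = prob_space P for P :: "('a::euclidean_space \<times> 'b::euclidean_space) measure" +
  assumes sets_P: "sets P = sets borel"
begin

lemma measurable_fst_P[measurable]: "fst \<in> borel_measurable P"
  and measurable_snd_P[measurable]: "snd \<in> borel_measurable P"
  using measurable_fst[of "borel :: 'a measure" "borel :: 'b measure"]
    measurable_snd[of "borel :: 'a measure" "borel :: 'b measure"]
  unfolding borel_prod measurable_cong_sets[OF sets_P refl] .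

sublocale X: euclidean_distribution "distr P borel fst"
  by (intro euclidean_distribution.intro euclidean_distribution_axioms.intro prob_space_distr) simp_all

sublocale Y: euclidean_distribution "distr P borel snd"
  by (intro euclidean_distribution.intro euclidean_distribution_axioms.intro prob_space_distr) simp_all

definition cross_moment :: "('a \<Rightarrow> real) \<Rightarrow> ('b \<Rightarrow> real) \<Rightarrow> real" where
  "cross_moment u v = (\<integral>z. u (fst z) * v (snd z) \<partial>P)"

lemma integral_trig_kernel_product_eq_cross_moments:
  "(\<integral>w. X.centered_trig_kernel s (fst (fst w)) (fst (snd w)) * Y.centered_trig_kernel t (snd (fst w)) (snd (snd w)) \<partial>(P \<Otimes>\<^sub>M P))
    = (cross_moment (X.centered_cos s) (Y.centered_cos t))\<^sup>2 + (cross_moment (X.centered_cos s) (Y.centered_sin t))\<^sup>2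
      + (cross_moment (X.centered_sin s) (Y.centered_cos t))\<^sup>2 + (cross_moment (X.centered_sin s) (Y.centered_sin t))\<^sup>2"
proof -
  interpret PPf: finite_measure "P \<Otimes>\<^sub>M P" by (rule finite_measure_pair_measure) unfold_locales
  define g where "g u v w = u (fst (fst w)) * v (snd (fst w)) * (u (fst (snd w)) * v (snd (snd w)))"
    for u :: "'a \<Rightarrow> real" and v :: "'b \<Rightarrow> real" and w :: "('a \<times> 'b) \<times> ('a \<times> 'b)"
  have square: "integral\<^sup>L (P \<Otimes>\<^sub>M P) (g u v) = (cross_moment u v)\<^sup>2"
    and integrable: "integrable (P \<Otimes>\<^sub>M P) (g u v)"
    if [measurable]: "u \<in> borel_measurable borel" "v \<in> borel_measurable borel"
      and "\<And>x. \<bar>u x\<bar> \<le> 2" "\<And>y. \<bar>v y\<bar> \<le> 2" for u v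
  proof -
    have bounded: "\<bar>u x * v y\<bar> \<le> 2 * 2" for x y
      unfolding abs_mult by (intro mult_mono that(3,4)) auto
    then show "integral\<^sup>L (P \<Otimes>\<^sub>M P) (g u v) = (cross_moment u v)\<^sup>2"
      unfolding g_def cross_moment_def power2_eq_square
      by (intro integral_pair_measure_mult_bounded finite_measure_axioms) measurable
    have "\<bar>u a * v b * (u c * v d)\<bar> \<le> (2 * 2) * (2 * 2)" for a b c d
      unfolding abs_mult[of "u a * v b"] by (intro mult_mono bounded) auto
    then show "integrable (P \<Otimes>\<^sub>M P) (g u v)"
      unfolding g_def by (intro PPf.integrable_const_bound[where B="(2 * 2) * (2 * 2)"]) (auto, measurable)
  qed
  note bounds = X.abs_centered_cos_le X.abs_centered_sin_le Y.abs_centered_cos_le Y.abs_centered_sin_le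
  have "(\<lambda>w. X.centered_trig_kernel s (fst (fst w)) (fst (snd w)) * Y.centered_trig_kernel t (snd (fst w)) (snd (snd w)))
      = (\<lambda>w. g (X.centered_cos s) (Y.centered_cos t) w + g (X.centered_cos s) (Y.centered_sin t) w
          + g (X.centered_sin s) (Y.centered_cos t) w + g (X.centered_sin s) (Y.centered_sin t) w)"
    unfolding g_def X.centered_trig_kernel_def Y.centered_trig_kernel_def by (simp add: fun_eq_iff algebra_simps)
  then show ?thesis
    by (simp add: square integrable bounds)
qed

lemma integrable_mult_fst_snd:
  fixes u :: "'a \<Rightarrow> real" and v :: "'b \<Rightarrow> real"
  assumes [measurable]: "u \<in> borel_measurable borel" "v \<in> borel_measurable borel"
    and "\<And>x. \<bar>u x\<bar> \<le> 1" "\<And>y. \<bar>v y\<bar> \<le> 1"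
  shows "integrable P (\<lambda>z. u (fst z) * v (snd z))"
proof -
  have "\<bar>u (fst z) * v (snd z)\<bar> \<le> 1" for z
    unfolding abs_mult by (intro mult_le_one assms(3,4)) auto
  then show ?thesis by (intro integrable_const_bound[where B=1]) auto
qed

lemma cross_moment_uminus_right: "cross_moment u (\<lambda>y. - v y) = - cross_moment u v"
  by (simp add: cross_moment_def)

lemma cross_moment_centered:
  fixes u :: "'a \<Rightarrow> real" and v :: "'b \<Rightarrow> real"
  assumes [measurable]: "u \<in> borel_measurable borel" "v \<in> borel_measurable borel"
    and "\<And>x. \<bar>u x\<bar> \<le> 1" "\<And>y. \<bar>v y\<bar> \<le> 1"
  shows "cross_moment (\<lambda>x. u x - X.expectation u) (\<lambda>y. v y - Y.expectation v)
    = (\<integral>z. u (fst z) * v (snd z) \<partial>P) - (\<integral>z. u (fst z) \<partial>P) * (\<integral>z. v (snd z) \<partial>P)"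
  unfolding cross_moment_def using assms(3,4)
  by (subst (1 2) integral_distr, simp_all)
    (intro integral_centered_mult integrable_mult_fst_snd integrable_const_bound[where B=1]; simp)

definition dcov_integrand :: "'a \<Rightarrow> 'b \<Rightarrow> real" where
  "dcov_integrand s t =
    (cmod ((\<integral>z. cis (s \<bullet> fst z + t \<bullet> snd z) \<partial>P) - (\<integral>z. cis (s \<bullet> fst z) \<partial>P) * (\<integral>z. cis (t \<bullet> snd z) \<partial>P)))\<^sup>2"

lemma dcov_integrand_eq_cross_moments:
  "dcov_integrand s t
    = (cross_moment (X.centered_cos s) (Y.centered_cos t) - cross_moment (X.centered_sin s) (Y.centered_sin t))\<^sup>2
      + (cross_moment (X.centered_cos s) (Y.centered_sin t) + cross_moment (X.centered_sin s) (Y.centered_cos t))\<^sup>2"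
proof -
  define c1 where "c1 x = cos (s \<bullet> x)" for x
  define s1 where "s1 x = sin (s \<bullet> x)" for x
  define c2 where "c2 y = cos (t \<bullet> y)" for y
  define s2 where "s2 y = sin (t \<bullet> y)" for y
  have measurable_trig[measurable]: "c1 \<in> borel_measurable borel" "s1 \<in> borel_measurable borel"
    "c2 \<in> borel_measurable borel" "s2 \<in> borel_measurable borel"
    unfolding c1_def s1_def c2_def s2_def by measurable
  have bounded: "\<bar>c1 x\<bar> \<le> 1" "\<bar>s1 x\<bar> \<le> 1" "\<bar>c2 y\<bar> \<le> 1" "\<bar>s2 y\<bar> \<le> 1" for x y
    unfolding c1_def s1_def c2_def s2_def by auto
  have centered: "X.centered_cos s = (\<lambda>x. c1 x - X.expectation c1)" "X.centered_sin s = (\<lambda>x. s1 x - X.expectation s1)"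
    "Y.centered_cos t = (\<lambda>y. c2 y - Y.expectation c2)" "Y.centered_sin t = (\<lambda>y. s2 y - Y.expectation s2)"
    unfolding c1_def s1_def c2_def s2_def X.centered_cos_def X.centered_sin_def
      Y.centered_cos_def Y.centered_sin_def by auto
  have integrable_cc: "integrable P (\<lambda>z. c1 (fst z) * c2 (snd z))"
    and integrable_ss: "integrable P (\<lambda>z. s1 (fst z) * s2 (snd z))"
    and integrable_sc: "integrable P (\<lambda>z. s1 (fst z) * c2 (snd z))"
    and integrable_cs: "integrable P (\<lambda>z. c1 (fst z) * s2 (snd z))"
    by (intro integrable_mult_fst_snd measurable_trig bounded)+
  have "(\<integral>z. cis (s \<bullet> fst z + t \<bullet> snd z) \<partial>P)
      = Complex (\<integral>z. c1 (fst z) * c2 (snd z) - s1 (fst z) * s2 (snd z) \<partial>P)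
          (\<integral>z. s1 (fst z) * c2 (snd z) + c1 (fst z) * s2 (snd z) \<partial>P)"
    unfolding c1_def s1_def c2_def s2_def by (subst integral_cis) (simp_all add: cos_add sin_add)
  also have "\<dots> = Complex ((\<integral>z. c1 (fst z) * c2 (snd z) \<partial>P) - (\<integral>z. s1 (fst z) * s2 (snd z) \<partial>P))
          ((\<integral>z. s1 (fst z) * c2 (snd z) \<partial>P) + (\<integral>z. c1 (fst z) * s2 (snd z) \<partial>P))"
    by (simp only: Bochner_Integration.integral_diff[OF integrable_cc integrable_ss]
        Bochner_Integration.integral_add[OF integrable_sc integrable_cs])
  finally have joint: "(\<integral>z. cis (s \<bullet> fst z + t \<bullet> snd z) \<partial>P) = \<dots>" .
  have marginals: "(\<integral>z. cis (s \<bullet> fst z) \<partial>P) = Complex (\<integral>z. c1 (fst z) \<partial>P) (\<integral>z. s1 (fst z) \<partial>P)"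
    "(\<integral>z. cis (t \<bullet> snd z) \<partial>P) = Complex (\<integral>z. c2 (snd z) \<partial>P) (\<integral>z. s2 (snd z) \<partial>P)"
    unfolding c1_def s1_def c2_def s2_def by (rule integral_cis; simp)+
  note moment = cross_moment_centered[OF _ _ bounded(1) bounded(3)] cross_moment_centered[OF _ _ bounded(1) bounded(4)]
    cross_moment_centered[OF _ _ bounded(2) bounded(3)] cross_moment_centered[OF _ _ bounded(2) bounded(4)]
  show ?thesis
    unfolding centered dcov_integrand_def joint marginals cmod_Complex_diff_mult_power2
    unfolding moment(1)[OF measurable_trig(1,3)] moment(2)[OF measurable_trig(1,4)]
      moment(3)[OF measurable_trig(2,3)] moment(4)[OF measurable_trig(2,4)] ..
qed

lemma dcov_integrand_bounded: "\<bar>dcov_integrand s t\<bar> \<le> 4"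
proof -
  have norm_le: "cmod (\<integral>z. cis (\<theta> z) \<partial>P) \<le> 1" for \<theta> :: "'a \<times> 'b \<Rightarrow> real"
    using integral_norm_bound[of P "\<lambda>z. cis (\<theta> z)"] prob_space by simp
  have "cmod ((\<integral>z. cis (s \<bullet> fst z + t \<bullet> snd z) \<partial>P) - (\<integral>z. cis (s \<bullet> fst z) \<partial>P) * (\<integral>z. cis (t \<bullet> snd z) \<partial>P)) \<le> 2"
    using norm_triangle_ineq4[of "\<integral>z. cis (s \<bullet> fst z + t \<bullet> snd z) \<partial>P" "(\<integral>z. cis (s \<bullet> fst z) \<partial>P) * (\<integral>z. cis (t \<bullet> snd z) \<partial>P)"]
      norm_le[of "\<lambda>z. s \<bullet> fst z + t \<bullet> snd z"]
      mult_le_one[OF norm_le[of "\<lambda>z. s \<bullet> fst z"] norm_ge_zero norm_le[of "\<lambda>z. t \<bullet> snd z"]]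
    unfolding norm_mult by linarith
  from power_mono[OF this norm_ge_zero, of 2] show ?thesis
    unfolding dcov_integrand_def by simp
qed

lemma borel_measurable_dcov_integrand: "dcov_integrand s \<in> borel_measurable borel"
  unfolding dcov_integrand_def[abs_def] by measurable

lemma dcov2_eq_integral_dcov_integrand:
  fixes M :: "'s measure" and X :: "'s \<Rightarrow> 'a" and Y :: "'s \<Rightarrow> 'b"
  assumes "X \<in> borel_measurable M" "Y \<in> borel_measurable M"
    and law: "distr M borel (\<lambda>\<omega>. (X \<omega>, Y \<omega>)) = P"
  shows "dcov2 \<mu> \<nu> M X Y = (\<integral>s. (\<integral>t. dcov_integrand s t \<partial>\<nu>) \<partial>\<mu>)"
proof -
  have XY: "(\<lambda>\<omega>. (X \<omega>, Y \<omega>)) \<in> borel_measurable M"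
    using measurable_Pair[OF assms(1,2)] unfolding borel_prod .
  have transport: "(\<integral>\<omega>. f (X \<omega>, Y \<omega>) \<partial>M) = (\<integral>z. f z \<partial>P)"
    if "f \<in> borel_measurable borel" for f :: "'a \<times> 'b \<Rightarrow> complex"
    unfolding law[symmetric] by (subst integral_distr[OF XY that]) simp
  have "(\<lambda>z. cis (s \<bullet> fst z + t \<bullet> snd z)) \<in> borel_measurable borel"
    "(\<lambda>z. cis (s \<bullet> fst z)) \<in> borel_measurable borel" "(\<lambda>z. cis (t \<bullet> snd z)) \<in> borel_measurable borel"
    for s :: 'a and t :: 'b
    by (intro borel_measurable_continuous_onI continuous_intros)+
  from this[THEN transport]
  have "joint_charfun M X Y s t = (\<integral>z. cis (s \<bullet> fst z + t \<bullet> snd z) \<partial>P)"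
    "charfun M X s = (\<integral>z. cis (s \<bullet> fst z) \<partial>P)" "charfun M Y t = (\<integral>z. cis (t \<bullet> snd z) \<partial>P)" for s t
    unfolding joint_charfun_def charfun_def by simp_all
  then show ?thesis
    unfolding dcov2_def dcov_integrand_def by simp
qed

lemma integral_trig_kernel_product_eq_dcov_integrand:
  "(\<integral>w. X.centered_trig_kernel s (fst (fst w)) (fst (snd w)) * Y.centered_trig_kernel t (snd (fst w)) (snd (snd w)) \<partial>(P \<Otimes>\<^sub>M P))
    = (dcov_integrand s t + dcov_integrand s (- t)) / 2"
proof -
  have sin_neg: "Y.centered_sin (- t) = (\<lambda>y. - Y.centered_sin t y)"
    by (simp add: fun_eq_iff Y.centered_sin_uminus)
  show ?thesis
    unfolding integral_trig_kernel_product_eq_cross_moments dcov_integrand_eq_cross_moments Y.centered_cos_uminus sin_neg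
    unfolding cross_moment_uminus_right
    by (simp add: power2_eq_square algebra_simps)
qed

lemma double_centered_kernel_levy_psi_mult:
  assumes "finite_measure \<mu>" "sets \<mu> = sets borel" "finite_measure \<nu>" "sets \<nu> = sets borel"
  shows "double_centered_kernel (distr P borel fst) (levy_psi \<mu>) x x'
      * double_centered_kernel (distr P borel snd) (levy_psi \<nu>) y y'
    = (\<integral>s. (\<integral>t. X.centered_trig_kernel s x x' * Y.centered_trig_kernel t y y' \<partial>\<nu>) \<partial>\<mu>)"
proof -
  have "double_centered_kernel (distr P borel fst) (levy_psi \<mu>) x x'
      * double_centered_kernel (distr P borel snd) (levy_psi \<nu>) y y'
      = (\<integral>s. X.centered_trig_kernel s x x' \<partial>\<mu>) * (\<integral>t. Y.centered_trig_kernel t y y' \<partial>\<nu>)"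
    by (simp add: X.double_centered_kernel_levy_psi[OF assms(1,2)] Y.double_centered_kernel_levy_psi[OF assms(3,4)])
  then show ?thesis
    unfolding integral_mult_right_zero integral_mult_left_zero[symmetric] .
qed

lemma borel_measurable_trig_kernel_product:
  assumes "sets \<mu> = sets borel" "sets \<nu> = sets borel"
  shows "(\<lambda>(s, t, w). X.centered_trig_kernel s (fst (fst w)) (fst (snd w)) * Y.centered_trig_kernel t (snd (fst w)) (snd (snd w)))
    \<in> borel_measurable (\<mu> \<Otimes>\<^sub>M (\<nu> \<Otimes>\<^sub>M (P \<Otimes>\<^sub>M P)))"
proof -
  let ?M = "\<mu> \<Otimes>\<^sub>M (\<nu> \<Otimes>\<^sub>M (P \<Otimes>\<^sub>M P))"
  have [measurable]: "(\<lambda>s. s) \<in> borel_measurable \<mu>" "(\<lambda>t. t) \<in> borel_measurable \<nu>"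
    by (rule measurable_ident_sets, fact)+
  have w1: "(\<lambda>p. fst (snd (snd p))) \<in> ?M \<rightarrow>\<^sub>M P" and w4: "(\<lambda>p. snd (snd (snd p))) \<in> ?M \<rightarrow>\<^sub>M P"
    by measurable
  have "(\<lambda>p. X.centered_trig_kernel (fst p) (fst (fst (snd (snd p)))) (fst (snd (snd (snd p))))
      * Y.centered_trig_kernel (fst (snd p)) (snd (fst (snd (snd p)))) (snd (snd (snd (snd p)))))
    \<in> borel_measurable ?M"
    by (intro borel_measurable_times X.borel_measurable_centered_trig_kernel Y.borel_measurable_centered_trig_kernel
        measurable_compose[OF w1 measurable_fst_P] measurable_compose[OF w4 measurable_fst_P]
        measurable_compose[OF w1 measurable_snd_P] measurable_compose[OF w4 measurable_snd_P]) measurable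
  then show ?thesis
    by (simp add: case_prod_beta')
qed

lemma integral_double_centered_kernel_product:
  assumes \<mu>: "finite_measure \<mu>" "sets \<mu> = sets borel"
    and \<nu>: "finite_measure \<nu>" "sets \<nu> = sets borel" "distr \<nu> borel uminus = \<nu>"
  shows "(\<integral>w. double_centered_kernel (distr P borel fst) (levy_psi \<mu>) (fst (fst w)) (fst (snd w))
        * double_centered_kernel (distr P borel snd) (levy_psi \<nu>) (snd (fst w)) (snd (snd w)) \<partial>(P \<Otimes>\<^sub>M P))
      = (\<integral>s. (\<integral>t. dcov_integrand s t \<partial>\<nu>) \<partial>\<mu>)"
proof -
  interpret PP: finite_measure "P \<Otimes>\<^sub>M P" by (rule finite_measure_pair_measure) unfold_locales
  have bounded: "\<bar>X.centered_trig_kernel s x x' * Y.centered_trig_kernel t y y'\<bar> \<le> 8 * 8" for s t x x' y y'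
    unfolding abs_mult by (intro mult_mono X.abs_centered_trig_kernel_le Y.abs_centered_trig_kernel_le) auto
  have "(\<integral>w. double_centered_kernel (distr P borel fst) (levy_psi \<mu>) (fst (fst w)) (fst (snd w))
        * double_centered_kernel (distr P borel snd) (levy_psi \<nu>) (snd (fst w)) (snd (snd w)) \<partial>(P \<Otimes>\<^sub>M P))
      = (\<integral>w. (\<integral>s. (\<integral>t. X.centered_trig_kernel s (fst (fst w)) (fst (snd w))
          * Y.centered_trig_kernel t (snd (fst w)) (snd (snd w)) \<partial>\<nu>) \<partial>\<mu>) \<partial>(P \<Otimes>\<^sub>M P))"
    by (simp only: double_centered_kernel_levy_psi_mult[OF \<mu> \<nu>(1,2)])
  also have "\<dots> = (\<integral>s. (\<integral>t. (\<integral>w. X.centered_trig_kernel s (fst (fst w)) (fst (snd w))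
          * Y.centered_trig_kernel t (snd (fst w)) (snd (snd w)) \<partial>(P \<Otimes>\<^sub>M P)) \<partial>\<nu>) \<partial>\<mu>)"
    by (rule Fubini_integral_bounded_triple[OF \<mu>(1) \<nu>(1) PP.finite_measure_axioms
          borel_measurable_trig_kernel_product[OF \<mu>(2) \<nu>(2)] bounded, symmetric])
  also have "\<dots> = (\<integral>s. (\<integral>t. (dcov_integrand s t + dcov_integrand s (- t)) / 2 \<partial>\<nu>) \<partial>\<mu>)"
    unfolding integral_trig_kernel_product_eq_dcov_integrand ..
  also have "\<dots> = (\<integral>s. (\<integral>t. dcov_integrand s t \<partial>\<nu>) \<partial>\<mu>)"
    by (simp only: integral_symmetrize[OF \<nu>(1,2,3) borel_measurable_dcov_integrand dcov_integrand_bounded])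
  finally show ?thesis .
qed

lemma borel_measurable_double_centered_kernel_mult:
  assumes "\<Phi> \<in> borel_measurable borel" "\<Psi> \<in> borel_measurable borel"
  shows "(\<lambda>w. double_centered_kernel (distr P borel fst) \<Phi> (fst (fst w)) (fst (snd w))
      * double_centered_kernel (distr P borel snd) \<Psi> (snd (fst w)) (snd (snd w)))
    \<in> borel_measurable (borel \<Otimes>\<^sub>M borel :: (('a \<times> 'b) \<times> ('a \<times> 'b)) measure)"
  by (intro borel_measurable_times X.borel_measurable_double_centered_kernel
      Y.borel_measurable_double_centered_kernel assms
      measurable_compose[OF measurable_fst borel_measurable_fst_borel]
      measurable_compose[OF measurable_snd borel_measurable_fst_borel]
      measurable_compose[OF measurable_fst borel_measurable_snd_borel]
      measurable_compose[OF measurable_snd borel_measurable_snd_borel])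

lemma integral_double_centered_product:
  fixes N :: "'s measure" and X1 X4 :: "'s \<Rightarrow> 'a" and Y1 Y4 :: "'s \<Rightarrow> 'b"
  assumes "prob_space N"
    and indep: "prob_space.indep_var N borel (\<lambda>\<omega>. (X1 \<omega>, Y1 \<omega>)) borel (\<lambda>\<omega>. (X4 \<omega>, Y4 \<omega>))"
    and law1: "distr N borel (\<lambda>\<omega>. (X1 \<omega>, Y1 \<omega>)) = P" and law4: "distr N borel (\<lambda>\<omega>. (X4 \<omega>, Y4 \<omega>)) = P"
    and measurable: "\<Phi> \<in> borel_measurable borel" "\<Psi> \<in> borel_measurable borel"
    and bounded: "\<And>x. \<bar>\<Phi> x\<bar> \<le> B" "\<And>y. \<bar>\<Psi> y\<bar> \<le> C"
  shows "(\<integral>\<omega>. double_centered N \<Phi> X1 X4 \<omega> * double_centered N \<Psi> Y1 Y4 \<omega> \<partial>N)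
    = (\<integral>w. double_centered_kernel (distr P borel fst) \<Phi> (fst (fst w)) (fst (snd w))
        * double_centered_kernel (distr P borel snd) \<Psi> (snd (fst w)) (snd (snd w)) \<partial>(P \<Otimes>\<^sub>M P))"
proof -
  interpret N: prob_space N by fact
  have indep_X: "N.indep_var borel X1 borel X4" and indep_Y: "N.indep_var borel Y1 borel Y4"
    by (rule N.indep_var_pair_components[OF indep])+
  have meas: "X1 \<in> borel_measurable N" "Y1 \<in> borel_measurable N" "X4 \<in> borel_measurable N" "Y4 \<in> borel_measurable N"
    by (rule N.indep_var_rv1[OF indep_X] N.indep_var_rv1[OF indep_Y]
        N.indep_var_rv2[OF indep_X] N.indep_var_rv2[OF indep_Y])+
  have law_X: "distr N borel X1 = distr P borel fst" "distr N borel X4 = distr P borel fst"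
    and law_Y: "distr N borel Y1 = distr P borel snd" "distr N borel Y4 = distr P borel snd"
    using distr_fst_pair[OF meas(1,2)] distr_snd_pair[OF meas(1,2)] distr_fst_pair[OF meas(3,4)]
      distr_snd_pair[OF meas(3,4)]
    unfolding law1 law4 by simp_all
  have "AE \<omega> in N. double_centered N \<Phi> X1 X4 \<omega> = double_centered_kernel (distr P borel fst) \<Phi> (X1 \<omega>) (X4 \<omega>)"
    using N.double_centered_AE_eq_kernel[OF indep_X _ measurable(1) bounded(1)] unfolding law_X by blast
  moreover have "AE \<omega> in N. double_centered N \<Psi> Y1 Y4 \<omega> = double_centered_kernel (distr P borel snd) \<Psi> (Y1 \<omega>) (Y4 \<omega>)"
    using N.double_centered_AE_eq_kernel[OF indep_Y _ measurable(2) bounded(2)] unfolding law_Y by blast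
  ultimately have "(\<integral>\<omega>. double_centered N \<Phi> X1 X4 \<omega> * double_centered N \<Psi> Y1 Y4 \<omega> \<partial>N)
      = (\<integral>\<omega>. double_centered_kernel (distr P borel fst) \<Phi> (X1 \<omega>) (X4 \<omega>)
          * double_centered_kernel (distr P borel snd) \<Psi> (Y1 \<omega>) (Y4 \<omega>) \<partial>N)"
    by (intro integral_cong_AE borel_measurable_times borel_measurable_double_centered
        X.borel_measurable_double_centered_kernel Y.borel_measurable_double_centered_kernel meas measurable)
      (elim AE_mp, intro AE_I2, simp)
  also have "\<dots> = (\<integral>w. double_centered_kernel (distr P borel fst) \<Phi> (fst (fst w)) (fst (snd w))
        * double_centered_kernel (distr P borel snd) \<Psi> (snd (fst w)) (snd (snd w)) \<partial>(P \<Otimes>\<^sub>M P))"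
    using N.integral_indep_var_same_law[OF indep law1 law4 borel_measurable_double_centered_kernel_mult[OF measurable]]
    by simp
  finally show ?thesis .
qed

end

theorem corollary3p5:
  fixes M N :: "'s measure"
    and \<mu> :: "'a::euclidean_space measure" and \<nu> :: "'b::euclidean_space measure"
    and X X1 X4 :: "'s \<Rightarrow> 'a" and Y Y1 Y4 :: "'s \<Rightarrow> 'b"
  assumes "prob_space M"
    and "X \<in> borel_measurable M" and "Y \<in> borel_measurable M"
    and "finite_measure \<mu>" and "symmetric_levy_measure \<mu>" and "full_support \<mu>"
    and "finite_measure \<nu>" and "symmetric_levy_measure \<nu>" and "full_support \<nu>"
    and "prob_space N"
    and "X1 \<in> borel_measurable N" and "Y1 \<in> borel_measurable N"
    and "X4 \<in> borel_measurable N" and "Y4 \<in> borel_measurable N"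
    and "distr N borel (\<lambda>\<omega>. (X1 \<omega>, Y1 \<omega>)) = distr M borel (\<lambda>\<omega>. (X \<omega>, Y \<omega>))"
    and "distr N borel (\<lambda>\<omega>. (X4 \<omega>, Y4 \<omega>)) = distr M borel (\<lambda>\<omega>. (X \<omega>, Y \<omega>))"
    and "prob_space.indep_var N borel (\<lambda>\<omega>. (X1 \<omega>, Y1 \<omega>)) borel (\<lambda>\<omega>. (X4 \<omega>, Y4 \<omega>))"
  shows "dcov2 \<mu> \<nu> M X Y =
    (LINT \<omega>|N. double_centered N (levy_psi \<mu>) X1 X4 \<omega> * double_centered N (levy_psi \<nu>) Y1 Y4 \<omega>)"
proof -
  define P where "P = distr M borel (\<lambda>\<omega>. (X \<omega>, Y \<omega>))"
  interpret M: prob_space M by fact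
  interpret joint_distribution P
    unfolding P_def using measurable_Pair[OF assms(2,3)] unfolding borel_prod
    by (intro joint_distribution.intro joint_distribution_axioms.intro M.prob_space_distr) simp_all
  have sets_\<mu>: "sets \<mu> = sets borel" and sets_\<nu>: "sets \<nu> = sets borel"
    using assms(5,8) by (simp_all add: symmetric_levy_measure_def)
  have "dcov2 \<mu> \<nu> M X Y = (\<integral>s. (\<integral>t. dcov_integrand s t \<partial>\<nu>) \<partial>\<mu>)"
    using assms(2,3) P_def[symmetric] by (rule dcov2_eq_integral_dcov_integrand)
  also have "\<dots> = (\<integral>w. double_centered_kernel (distr P borel fst) (levy_psi \<mu>) (fst (fst w)) (fst (snd w))
        * double_centered_kernel (distr P borel snd) (levy_psi \<nu>) (snd (fst w)) (snd (snd w)) \<partial>(P \<Otimes>\<^sub>M P))"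
    using assms(4) sets_\<mu> assms(7) sets_\<nu> symmetric_levy_measure_distr_uminus[OF assms(8)]
    by (rule integral_double_centered_kernel_product[symmetric])
  also have "\<dots> = (\<integral>\<omega>. double_centered N (levy_psi \<mu>) X1 X4 \<omega> * double_centered N (levy_psi \<nu>) Y1 Y4 \<omega> \<partial>N)"
    using assms(10,17) assms(15,16)[folded P_def]
      borel_measurable_levy_psi[OF assms(4) sets_\<mu>] borel_measurable_levy_psi[OF assms(7) sets_\<nu>]
      abs_levy_psi_le[OF assms(4)] abs_levy_psi_le[OF assms(7)]
    by (rule integral_double_centered_product[symmetric])
  finally show ?thesis .
qed

end
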